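(* Let $J\in\mathbb{Z}_{>0}$ be not of the form $J = 3^k\prod_i p_i^{l_i}\prod_j q_j^{2m_j}$ (with $k,l_i,m_j\in\mathbb{Z}_{\ge0}$, primes $p_i\equiv1\pmod 3$, primes $q_j\equiv -1\pmod 3$), and suppose $J$ satisfies one of: (1) $J$ is a prime; (2) $J=pq$ where $p,q$ are odd primes with $q>3p$; (3) $J=2p$ where $p$ is an odd prime. Then $\Lambda_h$ has no well-rounded sublattice of index $J$.
   Context: $\Lambda_h = \begin{bmatrix} 1 & -1/2 \\ 0 & \sqrt3/2\end{bmatrix}\mathbb{Z}^2$. A full-rank lattice in $\mathbb{R}^2$ is well-rounded if it has a basis consisting of vectors of minimal nonzero Euclidean norm. The index of a full-rank sublattice $\Gamma\subseteq\Lambda_h$ is $|\Lambda_h:\Gamma|=\det\Gamma/\det\Lambda_h$. *)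

theory Defs
  imports "HOL-Analysis.Analysis"
begin

definition lattice_gen :: "real^2 \<Rightarrow> real^2 \<Rightarrow> (real^2) set" where
  "lattice_gen b1 b2 = {of_int m *\<^sub>R b1 + of_int n *\<^sub>R b2 | m n. True}"

definition det2 :: "real^2 \<Rightarrow> real^2 \<Rightarrow> real" where
  "det2 b1 b2 = b1$1 * b2$2 - b1$2 * b2$1"

definition is_lattice_basis :: "(real^2) set \<Rightarrow> real^2 \<Rightarrow> real^2 \<Rightarrow> bool" where
  "is_lattice_basis L b1 b2 \<longleftrightarrow> det2 b1 b2 \<noteq> 0 \<and> L = lattice_gen b1 b2"

definition full_rank_lattice :: "(real^2) set \<Rightarrow> bool" where
  "full_rank_lattice L \<longleftrightarrow> (\<exists>b1 b2. is_lattice_basis L b1 b2)"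

definition lattice_det :: "(real^2) set \<Rightarrow> real" where
  "lattice_det L = (THE d. \<exists>b1 b2. is_lattice_basis L b1 b2 \<and> d = \<bar>det2 b1 b2\<bar>)"

definition well_rounded :: "(real^2) set \<Rightarrow> bool" where
  "well_rounded L \<longleftrightarrow> (\<exists>b1 b2. is_lattice_basis L b1 b2 \<and>
      (\<forall>v\<in>L. v \<noteq> 0 \<longrightarrow> norm b1 \<le> norm v \<and> norm b2 \<le> norm v))"

definition Lambda_h :: "(real^2) set" where
  "Lambda_h = lattice_gen (vector [1, 0]) (vector [-1/2, sqrt 3 / 2])"

definition lattice_index :: "(real^2) set \<Rightarrow> (real^2) set \<Rightarrow> real" where
  "lattice_index \<Lambda> \<Gamma> = lattice_det \<Gamma> / lattice_det \<Lambda>"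

definition special_form :: "nat \<Rightarrow> bool" where
  "special_form J \<longleftrightarrow> (\<exists>k A B l m. finite A \<and> finite B \<and>
      (\<forall>p\<in>A. prime p \<and> p mod 3 = 1) \<and> (\<forall>q\<in>B. prime q \<and> q mod 3 = 2) \<and>
      J = 3 ^ k * (\<Prod>p\<in>A. p ^ l p) * (\<Prod>q\<in>B. q ^ (2 * m q)))"

end

theory Submission
  imports Defs "HOL-Number_Theory.Number_Theory"
begin

text \<open>
  A vector of \<open>\<Lambda>\<^sub>h\<close> with coordinates \<open>(a, b)\<close> has squared length the Eisenstein
  norm \<open>a\<^sup>2 - a b + b\<^sup>2\<close>. For a minimal basis \<open>b\<^sub>1, b\<^sub>2\<close> of a well-rounded sublattice of
  index \<open>J\<close> put \<open>n = |b\<^sub>1|\<^sup>2 = |b\<^sub>2|\<^sup>2\<close> and \<open>P = 2 b\<^sub>1\<cdot>b\<^sub>2\<close>; then \<open>|P| \<le> n\<close> and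
  \<open>4n\<^sup>2 = P\<^sup>2 + 3J\<^sup>2\<close>, i.e. \<open>(2n - P)(2n + P) = 3J\<^sup>2\<close> with the two factors within a ratio
  of 3 of each other. For the three shapes of \<open>J\<close> this leaves only the factorisation
  \<open>J \<cdot> 3J\<close>, so \<open>n = J\<close> and \<open>J\<close> is an Eisenstein norm. But a prime \<open>r \<equiv> 2 (mod 3)\<close>
  dividing a norm divides it to an even power, whereas the failure of the special form
  provides such a prime dividing \<open>J\<close> exactly once.
\<close>

definition eisenstein_norm :: "int \<Rightarrow> int \<Rightarrow> int" where
  "eisenstein_norm a b = a\<^sup>2 - a * b + b\<^sup>2"

lemma fermat_little_int:
  fixes x :: int
  assumes "prime r"
  shows "[x ^ Suc (k * (r - 1)) = x] (mod int r)"
proof (cases "int r dvd x")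
  case True
  then show ?thesis by (simp add: cong_def dvd_imp_mod_0)
next
  case False
  define y where "y = nat (x mod int r)"
  have r0: "int r > 0" using assms prime_gt_0_nat by simp
  have xy: "[x = int y] (mod int r)" using r0 by (simp add: y_def cong_def)
  have "\<not> r dvd y"
    using False xy by (metis cong_dvd_iff int_dvd_int_iff)
  then have "[y ^ (r - 1) = 1] (mod r)" using fermat_theorem[OF assms] by blast
  then have "[int y ^ (r - 1) = 1] (mod int r)" by (metis cong_int_iff of_nat_1 of_nat_power)
  then have "[x ^ (r - 1) = 1] (mod int r)" using cong_pow[OF xy] cong_trans by blast
  then have "[(x ^ (r - 1)) ^ k = 1] (mod int r)" using cong_pow by fastforce
  then have "[x * x ^ (k * (r - 1)) = x * 1] (mod int r)"
    by (intro cong_mult cong_refl) (simp add: mult.commute[of k] power_mult)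
  then show ?thesis by simp
qed

lemma prime_dvd_eisenstein_norm_imp_dvd:
  fixes a b :: int
  assumes r: "prime r" "r mod 3 = 2" and dvd: "int r dvd eisenstein_norm a b"
  shows "int r dvd a \<and> int r dvd b"
proof -
  \<comment> \<open>\<open>3 e \<equiv> 1 (mod r - 1)\<close>, so cubing is invertible modulo \<open>r\<close>\<close>
  define e where "e = 2 * (r div 3) + 1"
  have e: "3 * e = Suc (2 * (r - 1))" using r(2) unfolding e_def by presburger
  have "a ^ 3 + b ^ 3 = (a + b) * eisenstein_norm a b"
    unfolding eisenstein_norm_def by (simp add: algebra_simps power2_eq_square power3_eq_cube)
  then have "[a ^ 3 = - (b ^ 3)] (mod int r)"
    using dvd by (simp add: cong_iff_dvd_diff)
  then have "[(a ^ 3) ^ e = (- (b ^ 3)) ^ e] (mod int r)" by (rule cong_pow)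
  moreover have "(- (b ^ 3)) ^ e = - ((b ^ 3) ^ e)" unfolding e_def by simp
  ultimately have "[a ^ (3 * e) = - (b ^ (3 * e))] (mod int r)" by (simp add: power_mult)
  then have "[a = - b] (mod int r)"
    unfolding e using fermat_little_int[OF r(1)] by (metis cong_minus_minus_iff cong_sym cong_trans)
  then have ab: "int r dvd a + b" by (simp add: cong_iff_dvd_diff)
  have "3 * b\<^sup>2 = eisenstein_norm a b - (a + b) * (a - 2 * b)"
    unfolding eisenstein_norm_def by (simp add: algebra_simps power2_eq_square)
  then have "int r dvd 3 * b\<^sup>2" using dvd ab by simp
  moreover have "\<not> int r dvd 3"
  proof
    assume "int r dvd 3"
    then have "r dvd 3" by (metis int_dvd_int_iff of_nat_numeral)
    then show False using primes_dvd_imp_eq[of r 3] r by simp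
  qed
  ultimately have "int r dvd b" using r(1) by (metis prime_dvd_mult_iff prime_dvd_power prime_nat_int_transfer)
  then show ?thesis using ab by (metis dvd_add_left_iff)
qed

lemma prime_sq_dvd_eisenstein_norm:
  fixes a b :: int
  assumes "prime r" "r mod 3 = 2" "int r dvd eisenstein_norm a b"
  shows "int r ^ 2 dvd eisenstein_norm a b"
proof -
  obtain a' b' where "a = int r * a'" "b = int r * b'"
    using prime_dvd_eisenstein_norm_imp_dvd[OF assms] by (meson dvdE)
  then have "eisenstein_norm a b = int r ^ 2 * eisenstein_norm a' b'"
    unfolding eisenstein_norm_def by (simp add: power2_eq_square algebra_simps)
  then show ?thesis by simp
qed

lemma balanced_product_bounds:
  fixes s t m :: int
  assumes "0 < s" "0 < t" "s \<le> 3 * t" "t \<le> 3 * s" "s * t = 3 * m\<^sup>2" "0 \<le> m"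
  shows "m \<le> s" "s \<le> 3 * m"
proof -
  have "s * s \<le> s * (3 * t)" using assms(1,3) by simp
  also have "\<dots> = (3 * m) * (3 * m)" using assms(5) by (simp add: power2_eq_square algebra_simps)
  finally show "s \<le> 3 * m" using assms(1,6) power2_le_imp_le[of s "3 * m"] by (simp add: power2_eq_square)
  have "3 * (m * m) = s * t" using assms(5) by (simp add: power2_eq_square)
  also have "\<dots> \<le> s * (3 * s)" using assms(1,4) by simp
  finally have "m * m \<le> s * s" by simp
  then show "m \<le> s" using assms(1,6) power2_le_imp_le[of m s] by (simp add: power2_eq_square)
qed

lemma balanced_prime_dvd:
  fixes s t M :: int
  assumes r: "prime r" and pos: "0 < s" "0 < t" and st: "s * t = int r ^ 2 * M"
    and "s \<le> 3 * t" and "3 * M < int r ^ 2"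
  shows "int r dvd t"
proof (rule ccontr)
  assume "\<not> int r dvd t"
  then have "coprime (int r ^ 2) t"
    using r by (simp add: prime_imp_coprime)
  then have "int r ^ 2 dvd s" using st by (metis coprime_dvd_mult_left_iff dvd_triv_left)
  then obtain s0 where s0: "s = int r ^ 2 * s0" by blast
  have r2: "0 < int r ^ 2" using r prime_gt_0_nat by simp
  then have "0 < s0" using pos(1) s0 by (simp add: zero_less_mult_iff)
  have "s0 * t = M" using st r2 unfolding s0 by (simp add: mult.assoc)
  then have "t \<le> M" using \<open>0 < s0\<close> pos(2) by (smt (verit) mult_le_cancel_right1)
  moreover have "int r ^ 2 \<le> s" using s0 \<open>0 < s0\<close> r2 by (simp add: mult_le_cancel_left1)
  ultimately show False using assms(5,6) by linarith
qed

lemma balanced_divide_prime: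
  fixes s t M :: int
  assumes r: "prime r" and pos: "0 < s" "0 < t" and st: "s * t = 3 * int r ^ 2 * M"
    and bal: "s \<le> 3 * t" "t \<le> 3 * s" and small: "9 * M < int r ^ 2"
  obtains s' t' where "s = int r * s'" "t = int r * t'" "0 < s'" "0 < t'"
    "s' * t' = 3 * M" "s' \<le> 3 * t'" "t' \<le> 3 * s'"
proof -
  have "int r dvd t"
    by (rule balanced_prime_dvd[OF r pos, of "3 * M"]) (use st bal small in auto)
  moreover have "int r dvd s"
    by (rule balanced_prime_dvd[OF r pos(2,1), of "3 * M"]) (use st bal small in \<open>auto simp: mult.commute\<close>)
  ultimately obtain s' t' where s': "s = int r * s'" and t': "t = int r * t'" by (meson dvdE)
  have r0: "0 < int r" using r prime_gt_0_nat by simp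
  have "int r ^ 2 * (s' * t') = int r ^ 2 * (3 * M)"
    using st unfolding s' t' by (simp add: algebra_simps power2_eq_square)
  then have "s' * t' = 3 * M" using r0 by simp
  moreover have "0 < s'" "0 < t'" using pos r0 s' t' by (simp_all add: zero_less_mult_iff)
  moreover have "s' \<le> 3 * t'" "t' \<le> 3 * s'" using bal r0 unfolding s' t' by (simp_all add: mult.left_commute)
  ultimately show ?thesis using that s' t' by blast
qed

lemma halve_factors:
  fixes s t M n :: int
  assumes pos: "0 < s" "0 < t" and st: "s * t = 4 * M" and sum: "s + t = 4 * n"
  obtains s' t' where "s = 2 * s'" "t = 2 * t'" "0 < s'" "0 < t'" "s' * t' = M"
proof -
  have "even (s + t)" "even (s * t)" using st sum by auto
  then have "even s \<and> even t" unfolding even_add even_mult_iff by blast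
  then obtain s' t' where e: "s = 2 * s'" "t = 2 * t'" by (meson evenE)
  have "4 * (s' * t') = 4 * M" using st unfolding e by (simp add: algebra_simps)
  then show ?thesis using that e pos by simp
qed

lemma balanced_sum_unit:
  fixes s t :: int
  assumes "0 < s" "0 < t" "s \<le> 3 * t" "t \<le> 3 * s" "s * t = 3"
  shows "s + t = 4"
proof -
  have "1 \<le> s" "s \<le> 3" "1 \<le> t" "t \<le> 3"
    using balanced_product_bounds[of s t 1] balanced_product_bounds[of t s 1] assms
    by (simp_all add: mult.commute)
  then have "s \<in> {1, 2, 3}" "t \<in> {1, 2, 3}" by auto
  then show ?thesis using assms(5) by auto
qed

lemma balanced_sum_odd_prime:
  fixes s t :: int
  assumes p: "prime p" "odd p" and pos: "0 < s" "0 < t" and bal: "s \<le> 3 * t" "t \<le> 3 * s"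
    and st: "s * t = 3 * int p ^ 2"
  shows "s + t = 4 * int p"
proof (cases "p = 3")
  case True
  have "3 \<le> s" "s \<le> 9" "3 \<le> t" "t \<le> 9"
    using balanced_product_bounds[of s t 3] balanced_product_bounds[of t s 3] assms True
    by (simp_all add: mult.commute)
  then have "s \<in> {3, 4, 5, 6, 7, 8, 9}" "t \<in> {3, 4, 5, 6, 7, 8, 9}" by auto
  then show ?thesis using st True by auto
next
  case False
  then have "5 \<le> p" using p prime_ge_2_nat[OF p(1)] by presburger
  then have "9 * 1 < int p ^ 2" using power_mono[of 5 "int p" 2] by simp
  then obtain s' t' where "s = int p * s'" "t = int p * t'" "0 < s'" "0 < t'"
    "s' * t' = 3" "s' \<le> 3 * t'" "t' \<le> 3 * s'"
    using balanced_divide_prime[OF p(1) pos _ bal, of 1] st by auto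
  then show ?thesis using balanced_sum_unit by (simp add: distrib_left[symmetric])
qed

lemma gram_norm_eq_index:
  fixes n P :: int and J :: nat
  assumes J: "prime J
         \<or> (\<exists>p q. prime p \<and> prime q \<and> odd p \<and> odd q \<and> q > 3 * p \<and> J = p * q)
         \<or> (\<exists>p. prime p \<and> odd p \<and> J = 2 * p)"
    and P: "\<bar>P\<bar> \<le> n" and gram: "4 * n\<^sup>2 = P\<^sup>2 + 3 * int J ^ 2"
  shows "n = int J"
proof -
  define s t where "s = 2 * n - P" and "t = 2 * n + P"
  have st: "s * t = 3 * int J ^ 2"
    using gram unfolding s_def t_def by (simp add: power2_eq_square algebra_simps)
  have sum: "s + t = 4 * n" unfolding s_def t_def by simp
  have bal: "s \<le> 3 * t" "t \<le> 3 * s" using P unfolding s_def t_def by auto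
  have "J \<noteq> 0" using J by (auto dest: prime_gt_0_nat)
  then have "0 < s * t" using st by simp
  moreover have "0 \<le> s" "0 \<le> t" using P unfolding s_def t_def by auto
  ultimately have pos: "0 < s" "0 < t" by (auto simp: zero_less_mult_iff)
  from J consider (odd_prime) "prime J" "odd J" | (two) "J = 2"
    | (two_primes) p q where "prime p" "prime q" "odd p" "q > 3 * p" "J = p * q"
    | (twice_prime) p where "prime p" "odd p" "J = 2 * p"
    by (metis prime_prime_factor two_is_prime_nat prime_odd_nat)
  then show ?thesis
  proof cases
    case odd_prime
    then show ?thesis using balanced_sum_odd_prime[OF _ _ pos bal st] sum by simp
  next
    case two
    then obtain s' t' where "s = 2 * s'" "t = 2 * t'" "0 < s'" "0 < t'" "s' * t' = 3"
      using halve_factors[OF pos _ sum, of 3] st by auto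
    then show ?thesis using balanced_sum_unit[of s' t'] sum bal two by simp
  next
    case (two_primes p q)
    have "3 * int p < int q" using two_primes(4) by simp
    then have "9 * int p ^ 2 < int q ^ 2" using power_strict_mono[of "3 * int p" "int q" 2] by simp
    moreover have "s * t = 3 * int q ^ 2 * int p ^ 2"
      using st two_primes(5) by (simp add: power_mult_distrib)
    ultimately obtain s' t' where "s = int q * s'" "t = int q * t'" "0 < s'" "0 < t'"
      "s' * t' = 3 * int p ^ 2" "s' \<le> 3 * t'" "t' \<le> 3 * s'"
      using balanced_divide_prime[OF two_primes(2) pos _ bal] by blast
    then have "s + t = int q * (4 * int p)"
      using balanced_sum_odd_prime[OF two_primes(1,3), of s' t'] by (simp add: distrib_left[symmetric])
    then show ?thesis using sum two_primes(5) by simp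
  next
    case (twice_prime p)
    obtain s' t' where "s = 2 * s'" "t = 2 * t'" "0 < s'" "0 < t'" "s' * t' = 3 * int p ^ 2"
      using halve_factors[OF pos _ sum, of "3 * int p ^ 2"] st twice_prime(3)
      by (auto simp: power_mult_distrib)
    then show ?thesis
      using balanced_sum_odd_prime[OF twice_prime(1,2), of s' t'] sum bal twice_prime(3) by simp
  qed
qed

lemma special_form_intro:
  assumes "finite A" "\<forall>p\<in>A. prime p \<and> p mod 3 = 1"
  shows "special_form (3 ^ k * \<Prod>A)"
  unfolding special_form_def
  by (rule exI[of _ k], rule exI[of _ A], rule exI[of _ "{}"], rule exI[of _ "\<lambda>_. 1"]) (use assms in auto)

lemma prime_mod_3_cases:
  assumes "prime (p :: nat)" "p mod 3 \<noteq> 2"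
  shows "p = 3 \<or> p mod 3 = 1"
proof -
  have "p mod 3 = 0 \<Longrightarrow> p = 3"
    using primes_dvd_imp_eq[of 3 p] assms(1) by (simp add: mod_eq_0_iff_dvd)
  then show ?thesis using assms(2) by presburger
qed

lemma prime_sq_dvd_mult_iff:
  assumes "prime (r :: nat)"
  shows "r\<^sup>2 dvd r * m \<longleftrightarrow> r dvd m"
  using assms prime_gt_0_nat[OF assms] by (simp add: power2_eq_square)

lemma not_special_form_obtain_prime:
  fixes J :: nat
  assumes J: "prime J
         \<or> (\<exists>p q. prime p \<and> prime q \<and> odd p \<and> odd q \<and> q > 3 * p \<and> J = p * q)
         \<or> (\<exists>p. prime p \<and> odd p \<and> J = 2 * p)"
    and not_special: "\<not> special_form J"
  obtains r where "prime r" "r mod 3 = 2" "r dvd J" "\<not> r\<^sup>2 dvd J"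
proof -
  from J consider (prime) "prime J" | (two_primes) p q where "prime p" "prime q" "3 * p < q" "J = p * q"
    | (twice_prime) p where "prime p" "odd p" "J = 2 * p"
    by blast
  then show ?thesis
  proof cases
    case prime
    have "J mod 3 = 2"
    proof (rule ccontr)
      assume "J mod 3 \<noteq> 2"
      then consider "J = 3" | "J mod 3 = 1" using prime_mod_3_cases[OF prime] by blast
      then have "special_form J"
        by cases (use special_form_intro[of "{}" 1] special_form_intro[of "{J}" 0] prime in simp_all)
      then show False using not_special by blast
    qed
    moreover have "\<not> J\<^sup>2 dvd J" using prime_sq_dvd_mult_iff[OF prime, of 1] prime by auto
    ultimately show ?thesis using prime by (intro that) simp_all
  next
    case (twice_prime p)
    have "\<not> 2\<^sup>2 dvd J" using twice_prime(2,3) prime_sq_dvd_mult_iff[OF two_is_prime_nat, of p] by simp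
    then show ?thesis using that[of 2] twice_prime(3) by simp
  next
    case (two_primes p q)
    have "p \<noteq> q" using two_primes(3) by auto
    have "\<not> p\<^sup>2 dvd J" "\<not> q\<^sup>2 dvd J"
      using primes_dvd_imp_eq[OF two_primes(1,2)] primes_dvd_imp_eq[OF two_primes(2,1)] \<open>p \<noteq> q\<close>
        prime_sq_dvd_mult_iff[OF two_primes(1), of q] prime_sq_dvd_mult_iff[OF two_primes(2), of p]
      unfolding two_primes(4) by (auto simp: mult.commute)
    moreover have "p mod 3 = 2 \<or> q mod 3 = 2"
    proof (rule ccontr)
      assume "\<not> (p mod 3 = 2 \<or> q mod 3 = 2)"
      then have p3: "p = 3 \<or> p mod 3 = 1" and "q = 3 \<or> q mod 3 = 1"
        using prime_mod_3_cases two_primes(1,2) by blast+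
      moreover have "q \<noteq> 3" using two_primes(3) prime_gt_0_nat[OF two_primes(1)] by linarith
      ultimately have q1: "q mod 3 = 1" by simp
      from p3 have "special_form J"
      proof
        assume "p = 3"
        then show ?thesis using special_form_intro[of "{q}" 1] two_primes q1 by simp
      next
        assume "p mod 3 = 1"
        then show ?thesis using special_form_intro[of "{p, q}" 0] two_primes q1 \<open>p \<noteq> q\<close> by simp
      qed
      then show False using not_special by blast
    qed
    ultimately show ?thesis using two_primes(1,2,4) by (metis that dvd_triv_left dvd_triv_right)
  qed
qed

lemma in_lattice_gen: "of_int m *\<^sub>R b1 + of_int n *\<^sub>R b2 \<in> lattice_gen b1 b2"
  unfolding lattice_gen_def by blast

lemma lattice_genE:
  assumes "x \<in> lattice_gen b1 b2"
  obtains m n :: int where "x = of_int m *\<^sub>R b1 + of_int n *\<^sub>R b2"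
  using assms unfolding lattice_gen_def by blast

lemma basis_in_lattice_gen:
  "b1 \<in> lattice_gen b1 b2" "b2 \<in> lattice_gen b1 b2"
  "b1 + b2 \<in> lattice_gen b1 b2" "b1 - b2 \<in> lattice_gen b1 b2"
  using in_lattice_gen[of 1 b1 0 b2] in_lattice_gen[of 0 b1 1 b2]
    in_lattice_gen[of 1 b1 1 b2] in_lattice_gen[of 1 b1 "-1" b2]
  by simp_all

lemma det2_lincomb:
  "det2 (x1 *\<^sub>R u + y1 *\<^sub>R v) (x2 *\<^sub>R u + y2 *\<^sub>R v) = (x1 * y2 - y1 * x2) * det2 u v"
  unfolding det2_def by (simp add: algebra_simps)

lemma is_lattice_basis_abs_det2_eq:
  assumes "is_lattice_basis L b1 b2" "is_lattice_basis L c1 c2"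
  shows "\<bar>det2 c1 c2\<bar> = \<bar>det2 b1 b2\<bar>"
proof -
  have Lb: "L = lattice_gen b1 b2" and db: "det2 b1 b2 \<noteq> 0"
    and Lc: "L = lattice_gen c1 c2"
    using assms unfolding is_lattice_basis_def by auto
  have "c1 \<in> lattice_gen b1 b2" "c2 \<in> lattice_gen b1 b2"
    "b1 \<in> lattice_gen c1 c2" "b2 \<in> lattice_gen c1 c2"
    using basis_in_lattice_gen Lb Lc by auto
  then obtain m1 n1 m2 n2 k1 l1 k2 l2 where
    c: "c1 = of_int m1 *\<^sub>R b1 + of_int n1 *\<^sub>R b2" "c2 = of_int m2 *\<^sub>R b1 + of_int n2 *\<^sub>R b2" and
    b: "b1 = of_int k1 *\<^sub>R c1 + of_int l1 *\<^sub>R c2" "b2 = of_int k2 *\<^sub>R c1 + of_int l2 *\<^sub>R c2"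
    by (elim lattice_genE)
  have e1: "det2 c1 c2 = of_int (m1 * n2 - n1 * m2) * det2 b1 b2"
    unfolding c det2_lincomb by simp
  have e2: "det2 b1 b2 = of_int (k1 * l2 - l1 * k2) * det2 c1 c2"
    unfolding b det2_lincomb by simp
  have "det2 b1 b2 = of_int ((k1 * l2 - l1 * k2) * (m1 * n2 - n1 * m2)) * det2 b1 b2"
    using e1 e2 by (simp add: mult.assoc)
  then have "of_int ((k1 * l2 - l1 * k2) * (m1 * n2 - n1 * m2)) = (1 :: real)" using db by simp
  then have "(k1 * l2 - l1 * k2) * (m1 * n2 - n1 * m2) = 1" by (simp only: of_int_eq_1_iff)
  then have "\<bar>m1 * n2 - n1 * m2\<bar> = 1" by (auto simp: zmult_eq_1_iff)
  then have "\<bar>real_of_int (m1 * n2 - n1 * m2)\<bar> = 1" by (metis of_int_abs of_int_1)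
  then show ?thesis using e1 by (simp add: abs_mult)
qed

lemma lattice_det_eq:
  assumes "is_lattice_basis L b1 b2"
  shows "lattice_det L = \<bar>det2 b1 b2\<bar>"
  unfolding lattice_det_def
proof (rule the_equality)
  fix d assume "\<exists>c1 c2. is_lattice_basis L c1 c2 \<and> d = \<bar>det2 c1 c2\<bar>"
  then show "d = \<bar>det2 b1 b2\<bar>" using is_lattice_basis_abs_det2_eq[OF assms] by blast
qed (use assms in blast)

lemma well_rounded_basis_gram:
  assumes basis: "is_lattice_basis L b1 b2"
    and min: "\<forall>v\<in>L. v \<noteq> 0 \<longrightarrow> norm b1 \<le> norm v \<and> norm b2 \<le> norm v"
  shows "b1 \<bullet> b1 = b2 \<bullet> b2" "2 * \<bar>b1 \<bullet> b2\<bar> \<le> b1 \<bullet> b1"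
proof -
  have L: "L = lattice_gen b1 b2" and d: "det2 b1 b2 \<noteq> 0"
    using basis unfolding is_lattice_basis_def by auto
  have nz: "b1 \<noteq> 0" "b2 \<noteq> 0" "b1 + b2 \<noteq> 0" "b1 - b2 \<noteq> 0"
    using d unfolding det2_def by (auto simp: algebra_simps eq_neg_iff_add_eq_0[symmetric])
  have mem: "b1 \<in> L" "b2 \<in> L" "b1 + b2 \<in> L" "b1 - b2 \<in> L"
    unfolding L by (rule basis_in_lattice_gen)+
  have le: "b1 \<bullet> b1 \<le> v \<bullet> v" "b2 \<bullet> b2 \<le> v \<bullet> v" if "v \<in> L" "v \<noteq> 0" for v
    using min that by (simp_all add: norm_le)
  have "b1 \<bullet> b1 \<le> b2 \<bullet> b2" "b2 \<bullet> b2 \<le> b1 \<bullet> b1"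
    "b1 \<bullet> b1 \<le> (b1 + b2) \<bullet> (b1 + b2)" "b1 \<bullet> b1 \<le> (b1 - b2) \<bullet> (b1 - b2)"
    using le(1)[OF mem(2) nz(2)] le(2)[OF mem(1) nz(1)] le(1)[OF mem(3) nz(3)] le(1)[OF mem(4) nz(4)]
    by simp_all
  then show "b1 \<bullet> b1 = b2 \<bullet> b2" "2 * \<bar>b1 \<bullet> b2\<bar> \<le> b1 \<bullet> b1"
    by (auto simp: inner_add_left inner_add_right inner_diff_left inner_diff_right inner_commute)
qed

definition hex :: "int \<Rightarrow> int \<Rightarrow> real^2" where
  "hex m n = of_int m *\<^sub>R vector [1, 0] + of_int n *\<^sub>R vector [-1/2, sqrt 3 / 2]"

lemma hex_components: "hex m n $ 1 = m - n / 2" "hex m n $ 2 = n * sqrt 3 / 2"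
  unfolding hex_def by simp_all

lemma inner_hex:
  "hex a b \<bullet> hex c d = (2 * a * c - a * d - b * c + 2 * b * d) / 2"
proof -
  have "hex a b \<bullet> hex c d = (a - b / 2) * (c - d / 2) + (b * d) * (sqrt 3 * sqrt 3) / 4"
    by (simp add: inner_vec_def sum_2 hex_components algebra_simps)
  then show ?thesis by (simp add: field_simps)
qed

lemma inner_hex_self: "hex a b \<bullet> hex a b = eisenstein_norm a b"
  unfolding inner_hex eisenstein_norm_def by (simp add: power2_eq_square)

lemma det2_hex: "det2 (hex a b) (hex c d) = sqrt 3 / 2 * (a * d - b * c)"
  unfolding det2_def hex_components by (simp add: field_simps)

lemma is_lattice_basis_Lambda_h:
  "is_lattice_basis Lambda_h (vector [1, 0]) (vector [-1/2, sqrt 3 / 2])"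
  unfolding is_lattice_basis_def Lambda_h_def det2_def by simp

lemma lattice_det_Lambda_h: "lattice_det Lambda_h = sqrt 3 / 2"
  using lattice_det_eq[OF is_lattice_basis_Lambda_h] unfolding det2_def by simp

lemma Lambda_hE:
  assumes "x \<in> Lambda_h"
  obtains m n where "x = hex m n"
  using assms unfolding Lambda_h_def hex_def by (elim lattice_genE)

lemma eisenstein_norm_mult_identity:
  "4 * eisenstein_norm a1 a2 * eisenstein_norm c1 c2
     = (2 * a1 * c1 - a1 * c2 - a2 * c1 + 2 * a2 * c2)\<^sup>2 + 3 * (a1 * c2 - a2 * c1)\<^sup>2"
  unfolding eisenstein_norm_def by (simp add: power2_eq_square algebra_simps)

lemma well_rounded_sublattice_gram:
  assumes sub: "\<Gamma> \<subseteq> Lambda_h" and wr: "well_rounded \<Gamma>"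
    and index: "lattice_index Lambda_h \<Gamma> = real J"
  obtains a b P where "\<bar>P\<bar> \<le> eisenstein_norm a b"
    "4 * (eisenstein_norm a b)\<^sup>2 = P\<^sup>2 + 3 * int J ^ 2"
proof -
  obtain b1 b2 where basis: "is_lattice_basis \<Gamma> b1 b2"
    and min: "\<forall>v\<in>\<Gamma>. v \<noteq> 0 \<longrightarrow> norm b1 \<le> norm v \<and> norm b2 \<le> norm v"
    using wr unfolding well_rounded_def by blast
  have "b1 \<in> \<Gamma>" "b2 \<in> \<Gamma>"
    using basis basis_in_lattice_gen unfolding is_lattice_basis_def by auto
  then obtain a1 a2 c1 c2 where b: "b1 = hex a1 a2" "b2 = hex c1 c2"
    using sub by (meson Lambda_hE subsetD)
  define P where "P = 2 * a1 * c1 - a1 * c2 - a2 * c1 + 2 * a2 * c2"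
  define D where "D = a1 * c2 - a2 * c1"
  have norms: "eisenstein_norm a1 a2 = eisenstein_norm c1 c2"
    using well_rounded_basis_gram(1)[OF basis min] unfolding b inner_hex_self by simp
  have "2 * \<bar>b1 \<bullet> b2\<bar> = \<bar>real_of_int P\<bar>"
    unfolding b inner_hex P_def by simp
  then have "\<bar>P\<bar> \<le> eisenstein_norm a1 a2"
    using well_rounded_basis_gram(2)[OF basis min] unfolding b inner_hex_self by linarith
  moreover have "\<bar>D\<bar> = int J"
  proof -
    have "\<bar>sqrt 3 / 2 * D\<bar> / (sqrt 3 / 2) = real J"
      using index lattice_det_eq[OF basis]
      unfolding lattice_index_def lattice_det_Lambda_h b det2_hex D_def by simp
    then show ?thesis by (simp add: abs_mult)
  qed
  then have "D\<^sup>2 = int J ^ 2" by (metis power2_abs)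
  then have "4 * (eisenstein_norm a1 a2)\<^sup>2 = P\<^sup>2 + 3 * int J ^ 2"
    using eisenstein_norm_mult_identity[of a1 a2 c1 c2] norms
    unfolding P_def D_def by (simp add: power2_eq_square)
  ultimately show ?thesis by (rule that)
qed

theorem lemma5p4:
  fixes J :: nat
  assumes "J > 0"
    and "\<not> special_form J"
    and "prime J
         \<or> (\<exists>p q. prime p \<and> prime q \<and> odd p \<and> odd q \<and> q > 3 * p \<and> J = p * q)
         \<or> (\<exists>p. prime p \<and> odd p \<and> J = 2 * p)"
  shows "\<not> (\<exists>\<Gamma>. \<Gamma> \<subseteq> Lambda_h \<and> full_rank_lattice \<Gamma> \<and> well_rounded \<Gamma>
              \<and> lattice_index Lambda_h \<Gamma> = real J)"
proof
  assume "\<exists>\<Gamma>. \<Gamma> \<subseteq> Lambda_h \<and> full_rank_lattice \<Gamma> \<and> well_rounded \<Gamma>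
              \<and> lattice_index Lambda_h \<Gamma> = real J"
  then obtain \<Gamma> where sub: "\<Gamma> \<subseteq> Lambda_h" and wr: "well_rounded \<Gamma>"
    and index: "lattice_index Lambda_h \<Gamma> = real J" by blast
  obtain a b P where "\<bar>P\<bar> \<le> eisenstein_norm a b"
    and "4 * (eisenstein_norm a b)\<^sup>2 = P\<^sup>2 + 3 * int J ^ 2"
    using well_rounded_sublattice_gram[OF sub wr index] .
  then have norm: "eisenstein_norm a b = int J" by (rule gram_norm_eq_index[OF assms(3)])
  obtain r where r: "prime r" "r mod 3 = 2" "r dvd J" "\<not> r\<^sup>2 dvd J"
    using not_special_form_obtain_prime[OF assms(3,2)] .
  have "int (r\<^sup>2) dvd int J"
    using prime_sq_dvd_eisenstein_norm[OF r(1,2), of a b] r(3) unfolding norm by simp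
  then show False using r(4) by (simp only: int_dvd_int_iff)
qed

end
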